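(* Let $n,v\ge1$, $\mathcal{R}=\mathbb{F}_q[x_1,\dots,x_v]/\langle x_1^{i_1}\cdots x_v^{i_v}\mid i_1+\dots+i_v=n\rangle$, and let $I$ be an ideal of $\mathcal{R}$. Then the number of additive characters $\psi$ on $\mathcal{R}$ such that $I$ is the ideal maximally contained in $\ker(\psi)$ (i.e. $I$ is contained in $\ker\psi$ and contains every ideal of $\mathcal{R}$ contained in $\ker\psi$) is \[ \frac{|\mathcal{R}|}{|I|}\cdot\begin{cases}1 & \dim(\operatorname{Soc}(\mathcal{R}/I))=0,\\ 1-\frac1q & \dim(\operatorname{Soc}(\mathcal{R}/I))=1,\\ 0 & \text{otherwise.}\end{cases} \]
   Context: The socle $\operatorname{Soc}(\mathcal{R}/I)$ is the $\mathbb{F}_q$-subspace $\{f\in\mathcal{R}/I\mid x_1f=0,\dots,x_vf=0\}$ of $\mathcal{R}/I$, and $\dim$ denotes dimension over $\mathbb{F}_q$. An additive character is a homomorphism from $(\mathcal{R},+)$ to the complex unit circle. *)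

theory Defs
  imports "HOL-Algebra.Ideal" "HOL-Library.Function_Algebras" Complex_Main
begin

text \<open>Model of R = F_q[x_1..x_v] / (monomials of total degree n): elements are
  coefficient functions on exponent vectors e (indices 0..v-1) of total degree < n.\<close>

definition Rmonos :: "nat \<Rightarrow> nat \<Rightarrow> (nat \<Rightarrow> nat) set" where
  "Rmonos v n = {e. (\<forall>i\<ge>v. e i = 0) \<and> (\<Sum>i<v. e i) < n}"

definition Rcar :: "nat \<Rightarrow> nat \<Rightarrow> ((nat \<Rightarrow> nat) \<Rightarrow> 'a::field) set" where
  "Rcar v n = {f. \<forall>e. e \<notin> Rmonos v n \<longrightarrow> f e = 0}"

definition Rmult :: "nat \<Rightarrow> nat \<Rightarrow> ((nat \<Rightarrow> nat) \<Rightarrow> 'a::field) \<Rightarrow> ((nat \<Rightarrow> nat) \<Rightarrow> 'a) \<Rightarrow> ((nat \<Rightarrow> nat) \<Rightarrow> 'a)" where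
  "Rmult v n f g = (\<lambda>e. if e \<in> Rmonos v n
      then (\<Sum>a\<in>{a\<in>Rmonos v n. a \<le> e}. f a * g (e - a)) else 0)"

definition Rone :: "((nat \<Rightarrow> nat) \<Rightarrow> 'a::field)" where
  "Rone = (\<lambda>e. if e = (\<lambda>_. 0) then 1 else 0)"

definition Rring :: "nat \<Rightarrow> nat \<Rightarrow> ((nat \<Rightarrow> nat) \<Rightarrow> 'a::field) ring" where
  "Rring v n = \<lparr>carrier = Rcar v n, monoid.mult = Rmult v n, one = Rone,
                 zero = (\<lambda>_. 0), add = (+)\<rparr>"

text \<open>The variable x_i (i < v), i.e. the class of x_{i+1}.\<close>
definition xvar :: "nat \<Rightarrow> nat \<Rightarrow> nat \<Rightarrow> ((nat \<Rightarrow> nat) \<Rightarrow> 'a::field)" where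
  "xvar v n i = (\<lambda>e. if e = (\<lambda>j. if j = i then 1 else 0) \<and> e \<in> Rmonos v n then 1 else 0)"

definition Rscale :: "'a::field \<Rightarrow> ((nat \<Rightarrow> nat) \<Rightarrow> 'a) \<Rightarrow> ((nat \<Rightarrow> nat) \<Rightarrow> 'a)" where
  "Rscale c f = (\<lambda>e. c * f e)"

text \<open>Preimage in R of Soc(R/I): {f | x_i f \<in> I for all i}.\<close>
definition soc_pre :: "nat \<Rightarrow> nat \<Rightarrow> ((nat \<Rightarrow> nat) \<Rightarrow> 'a::field) set \<Rightarrow> ((nat \<Rightarrow> nat) \<Rightarrow> 'a) set" where
  "soc_pre v n I = {f \<in> Rcar v n. \<forall>i<v. Rmult v n (xvar v n i) f \<in> I}"

text \<open>dim_{F_q} Soc(R/I) = dim(soc_pre I) - dim I (dimension of the quotient space).\<close>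
definition socle_dim :: "nat \<Rightarrow> nat \<Rightarrow> ((nat \<Rightarrow> nat) \<Rightarrow> 'a::field) set \<Rightarrow> nat" where
  "socle_dim v n I = vector_space.dim Rscale (soc_pre v n I) - vector_space.dim Rscale I"

definition add_char :: "nat \<Rightarrow> nat \<Rightarrow> (((nat \<Rightarrow> nat) \<Rightarrow> 'a::field) \<Rightarrow> complex) \<Rightarrow> bool" where
  "add_char v n \<psi> \<longleftrightarrow> \<psi> \<in> extensional (Rcar v n) \<and>
     (\<forall>f\<in>Rcar v n. cmod (\<psi> f) = 1) \<and>
     (\<forall>f\<in>Rcar v n. \<forall>g\<in>Rcar v n. \<psi> (f + g) = \<psi> f * \<psi> g)"

definition char_ker :: "nat \<Rightarrow> nat \<Rightarrow> (((nat \<Rightarrow> nat) \<Rightarrow> 'a::field) \<Rightarrow> complex) \<Rightarrow> ((nat \<Rightarrow> nat) \<Rightarrow> 'a) set" where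
  "char_ker v n \<psi> = {f \<in> Rcar v n. \<psi> f = 1}"

end

theory Submission
  imports Defs
begin

text \<open>
  Characters trivial on \<open>I\<close> are the characters of \<open>R/I\<close>; extending characters one
  cyclic step at a time shows that there are \<open>|R|/|I|\<close> of them.  For such a \<open>\<psi>\<close>, the
  ideal \<open>I\<close> is the largest ideal in \<open>ker \<psi>\<close> iff \<open>\<psi>\<close> kills no line \<open>\<bbbF>\<^sub>q f\<close> with
  \<open>f\<close> a nonzero element of \<open>Soc(R/I)\<close>.  Indeed, the variables annihilate \<open>f\<close> modulo \<open>I\<close>,
  so \<open>I + \<bbbF>\<^sub>q f\<close> is an ideal; conversely, multiplying an element of an ideal \<open>J \<not>\<subseteq> I\<close>
  by variables as long as the product stays outside \<open>I\<close> ends, by nilpotency, in the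
  socle.  If the socle is \<open>0\<close>, every \<open>\<psi>\<close> qualifies; if it is a line, exactly those
  \<open>\<psi>\<close> that are nontrivial on it, i.e. \<open>|R|/|I| - |R|/(q|I|)\<close> of them.  If its dimension
  is at least two, then \<open>f \<mapsto> (c \<mapsto> \<psi>(c f))\<close> maps the socle into the \<open>q\<close> characters
  of \<open>\<bbbF>\<^sub>q\<close>, so by pigeonhole two elements with difference outside \<open>I\<close> have the same
  image, and \<open>\<psi>\<close> kills the line of their difference.
\<close>

section \<open>Finite vector spaces\<close>

lemma two_le_card_field: "finite (UNIV :: 'a::field set) \<Longrightarrow> 2 \<le> card (UNIV :: 'a set)"
  using card_mono[of UNIV "{0, 1 :: 'a}"] by simp

lemma (in vector_space) card_subspace:
  assumes "finite (UNIV :: 'a set)" and "finite W" and "subspace W"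
  shows "card W = card (UNIV :: 'a set) ^ dim W"
proof -
  obtain B where B: "B \<subseteq> W" "independent B" "W \<subseteq> span B" "card B = dim W"
    using basis_exists by blast
  have "finite B" using B(1) assms(2) finite_subset by blast
  let ?F = "\<lambda>u. \<Sum>b\<in>B. u b *s b"
  have "?F ` (B \<rightarrow>\<^sub>E UNIV) = range ?F"
  proof (intro equalityI subsetI)
    fix x assume "x \<in> range ?F"
    then obtain u where "x = ?F u" by blast
    then have "x = ?F (restrict u B)" by (auto intro: sum.cong)
    moreover have "restrict u B \<in> B \<rightarrow>\<^sub>E UNIV" by simp
    ultimately show "x \<in> ?F ` (B \<rightarrow>\<^sub>E UNIV)" by blast
  qed auto
  also have "\<dots> = W"
    using span_finite[OF \<open>finite B\<close>] span_subspace[OF B(1,3) assms(3)] by simp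
  finally have image: "?F ` (B \<rightarrow>\<^sub>E UNIV) = W" .
  have "inj_on ?F (B \<rightarrow>\<^sub>E UNIV)"
  proof (rule inj_onI)
    fix u u' assume u: "u \<in> B \<rightarrow>\<^sub>E UNIV" "u' \<in> B \<rightarrow>\<^sub>E UNIV" and "?F u = ?F u'"
    then have sum0: "(\<Sum>b\<in>B. (u b - u' b) *s b) = 0"
      by (simp add: scale_left_diff_distrib sum_subtractf)
    have "\<And>S w. S \<subseteq> B \<Longrightarrow> finite S \<Longrightarrow> (\<Sum>b\<in>S. w b *s b) = 0 \<Longrightarrow> \<forall>b\<in>S. w b = 0"
      using B(2) unfolding independent_explicit_finite_subsets by simp
    from this[OF order_refl \<open>finite B\<close> sum0] have "\<forall>b\<in>B. u b - u' b = 0" .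
    then show "u = u'" using u by (auto intro: PiE_ext)
  qed
  then have "card W = card (B \<rightarrow>\<^sub>E (UNIV :: 'a set))" using card_image image by fastforce
  also have "\<dots> = card (UNIV :: 'a set) ^ dim W" using B(4) \<open>finite B\<close> by (simp add: card_PiE)
  finally show ?thesis .
qed

lemma (in vector_space) card_subspace_subset:
  assumes "finite (UNIV :: 'a set)" "finite T" "subspace S" "subspace T" "S \<subseteq> T"
  shows "dim S \<le> dim T" and "card T = card (UNIV :: 'a set) ^ (dim T - dim S) * card S"
proof -
  have "2 \<le> card (UNIV :: 'a set)" using two_le_card_field[OF assms(1)] .
  moreover have "card (UNIV :: 'a set) ^ dim S \<le> card (UNIV :: 'a set) ^ dim T"
    using card_mono[OF assms(2,5)] card_subspace[OF assms(1)] assms(2-5) finite_subset by metis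
  ultimately show le: "dim S \<le> dim T" by (simp add: power_increasing_iff)
  show "card T = card (UNIV :: 'a set) ^ (dim T - dim S) * card S"
    using card_subspace[OF assms(1)] assms(2-5) finite_subset le by (metis le_add_diff_inverse2 power_add)
qed

lemma (in vector_space) dim_psubset_subspace:
  assumes "finite (UNIV :: 'a set)" "finite T" "subspace S" "subspace T" "S \<subset> T"
  shows "dim S < dim T"
  using card_subspace_subset[OF assms(1-4)] assms(5) psubset_card_mono[OF assms(2,5)]
  by (metis less_le mult_1 power_0 diff_self_eq_0)

section \<open>Counting characters of finite abelian groups\<close>

definition add_subgroup :: "'b::ab_group_add set \<Rightarrow> bool" where
  "add_subgroup S \<longleftrightarrow> 0 \<in> S \<and> (\<forall>x\<in>S. \<forall>y\<in>S. x + y \<in> S) \<and> (\<forall>x\<in>S. - x \<in> S)"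

definition character :: "'b::ab_group_add set \<Rightarrow> ('b \<Rightarrow> complex) \<Rightarrow> bool" where
  "character G \<psi> \<longleftrightarrow> \<psi> \<in> extensional G \<and> (\<forall>x\<in>G. cmod (\<psi> x) = 1) \<and>
     (\<forall>x\<in>G. \<forall>y\<in>G. \<psi> (x + y) = \<psi> x * \<psi> y)"

definition char_extensions :: "'b::ab_group_add set \<Rightarrow> 'b set \<Rightarrow> ('b \<Rightarrow> complex) \<Rightarrow> ('b \<Rightarrow> complex) set" where
  "char_extensions G H \<chi> = {\<psi>. character G \<psi> \<and> (\<forall>x\<in>H. \<psi> x = \<chi> x)}"

lemma add_subgroup_zero: "add_subgroup S \<Longrightarrow> 0 \<in> S"
  and add_subgroup_add: "add_subgroup S \<Longrightarrow> x \<in> S \<Longrightarrow> y \<in> S \<Longrightarrow> x + y \<in> S"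
  and add_subgroup_uminus: "add_subgroup S \<Longrightarrow> x \<in> S \<Longrightarrow> - x \<in> S"
  by (simp_all add: add_subgroup_def)

lemma add_subgroup_diff: "add_subgroup S \<Longrightarrow> x \<in> S \<Longrightarrow> y \<in> S \<Longrightarrow> x - y \<in> S"
  using add_subgroup_add[of S x "- y"] add_subgroup_uminus[of S y] by simp

lemma add_subgroup_of_nat_mult:
  fixes g :: "'b::ring_1"
  shows "add_subgroup S \<Longrightarrow> g \<in> S \<Longrightarrow> of_nat k * g \<in> S"
  by (induction k) (simp_all add: add_subgroup_zero add_subgroup_add distrib_right)

lemma character_norm: "character G \<psi> \<Longrightarrow> x \<in> G \<Longrightarrow> cmod (\<psi> x) = 1"
  and character_add: "character G \<psi> \<Longrightarrow> x \<in> G \<Longrightarrow> y \<in> G \<Longrightarrow> \<psi> (x + y) = \<psi> x * \<psi> y"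
  by (simp_all add: character_def)

lemma character_nonzero: "character G \<psi> \<Longrightarrow> x \<in> G \<Longrightarrow> \<psi> x \<noteq> 0"
  using character_norm by fastforce

lemma character_zero:
  assumes "character G \<psi>" "add_subgroup G"
  shows "\<psi> 0 = 1"
proof -
  have "0 \<in> G" using assms(2) add_subgroup_zero by blast
  then have "\<psi> 0 * \<psi> 0 = \<psi> 0 * 1" "\<psi> 0 \<noteq> 0"
    using character_add[OF assms(1)] character_nonzero[OF assms(1)] by fastforce+
  then show ?thesis by (metis mult_left_cancel)
qed

lemma character_diff:
  assumes "character G \<psi>" "add_subgroup G" "x \<in> G" "y \<in> G"
  shows "\<psi> (x - y) = \<psi> x / \<psi> y"
proof -
  have "\<psi> x = \<psi> (x - y) * \<psi> y"
    using character_add[OF assms(1) add_subgroup_diff[OF assms(2-4)] assms(4)] by simp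
  then show ?thesis using character_nonzero[OF assms(1,4)] by (simp add: field_simps)
qed

lemma character_of_nat_mult:
  fixes g :: "'b::ring_1"
  assumes "character G \<psi>" "add_subgroup G" "g \<in> G"
  shows "\<psi> (of_nat k * g) = \<psi> g ^ k"
proof (induction k)
  case 0 then show ?case using character_zero[OF assms(1,2)] by simp
next
  case (Suc k)
  have "of_nat (Suc k) * g = g + of_nat k * g" by (simp add: distrib_right)
  then show ?case
    using Suc character_add[OF assms(1,3) add_subgroup_of_nat_mult[OF assms(2,3)]] by simp
qed

lemma character_restrict:
  assumes "character G \<psi>" "K \<subseteq> G" "add_subgroup K"
  shows "character K (restrict \<psi> K)"
  using assms add_subgroup_add[OF assms(3)] unfolding character_def by (simp add: subset_iff)

text \<open>Adjoining an element \<open>g\<close> to a subgroup \<open>H\<close>: with \<open>m\<close> the order of \<open>g\<close> modulo \<open>H\<close>,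
  every element of \<open>H + \<langle>g\<rangle>\<close> is uniquely \<open>h + k g\<close> with \<open>h \<in> H\<close>, \<open>k < m\<close>, and the extensions
  of a character \<open>\<chi>\<close> of \<open>H\<close> correspond to the \<open>m\<close>-th roots of \<open>\<chi> (m g)\<close>.
  The multiple \<open>k g\<close> is written \<open>of_nat k * g\<close>, hence the \<open>ring_1\<close> carrier type.\<close>

locale subgroup_adjoin =
  fixes G H :: "'b::ring_1 set" and g :: 'b
  assumes subgroup_G: "add_subgroup G" and finite_G: "finite G"
    and subgroup_H: "add_subgroup H" and H_subset: "H \<subseteq> G"
    and g_in_G: "g \<in> G" and g_notin_H: "g \<notin> H"
begin

definition period where "period = (LEAST m. 0 < m \<and> of_nat m * g \<in> H)"

definition Hg where "Hg = {h + of_nat k * g | h k. h \<in> H \<and> k < period}"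

lemma of_nat_diff_mult: "k1 \<le> k2 \<Longrightarrow> of_nat (k2 - k1) * g = of_nat k2 * g - of_nat k1 * g"
  by (simp add: of_nat_diff left_diff_distrib)

lemma period_exists: "\<exists>m. 0 < m \<and> of_nat m * g \<in> H"
proof -
  have "range (\<lambda>k::nat. of_nat k * g) \<subseteq> G"
    using add_subgroup_of_nat_mult[OF subgroup_G g_in_G] by blast
  then have "\<not> inj (\<lambda>k::nat. of_nat k * g)"
    using finite_G finite_subset finite_imageD by (metis infinite_UNIV_nat)
  then obtain a b :: nat where "a < b" "of_nat a * g = of_nat b * g"
    unfolding inj_def by (metis linorder_neqE_nat)
  then have "0 < b - a" "of_nat (b - a) * g \<in> H"
    using of_nat_diff_mult[of a b] add_subgroup_zero[OF subgroup_H] by auto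
  then show ?thesis by blast
qed

lemma period_pos: "0 < period" and period_mult_in_H: "of_nat period * g \<in> H"
  using LeastI_ex[OF period_exists] unfolding period_def by auto

lemma of_nat_mult_notin_H: "0 < j \<Longrightarrow> j < period \<Longrightarrow> of_nat j * g \<notin> H"
  using not_less_Least[of j "\<lambda>m. 0 < m \<and> of_nat m * g \<in> H"] unfolding period_def by blast

lemma period_gt_1: "1 < period"
proof -
  have "period \<noteq> 1" using period_mult_in_H g_notin_H by auto
  then show ?thesis using period_pos by linarith
qed

lemma Hg_repr_unique:
  assumes "h \<in> H" "h' \<in> H" "k < period" "k' < period" "h + of_nat k * g = h' + of_nat k' * g"
  shows "k = k' \<and> h = h'"
proof -
  have *: False if "h \<in> H" "h' \<in> H" "k < k'" "k' < period" "h + of_nat k * g = h' + of_nat k' * g"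
    for h h' k k'
  proof -
    have "of_nat (k' - k) * g = h - h'"
      using that(3,5) of_nat_diff_mult[of k k'] by (simp add: algebra_simps)
    then have "of_nat (k' - k) * g \<in> H" using add_subgroup_diff[OF subgroup_H that(1,2)] by metis
    moreover have "0 < k' - k" "k' - k < period" using that(3,4) by auto
    ultimately show False using of_nat_mult_notin_H by blast
  qed
  have "k = k'" using *[OF assms(1,2) _ assms(4,5)] *[OF assms(2,1) _ assms(3) assms(5)[symmetric]]
    by (metis linorder_neqE_nat)
  then show ?thesis using assms(5) by simp
qed

lemma HgI: "h \<in> H \<Longrightarrow> k < period \<Longrightarrow> h + of_nat k * g \<in> Hg"
  unfolding Hg_def by blast

lemma HgE:
  assumes "x \<in> Hg"
  obtains h k where "h \<in> H" "k < period" "x = h + of_nat k * g"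
  using assms unfolding Hg_def by blast

lemma Hg_subset: "Hg \<subseteq> G"
  using add_subgroup_add[OF subgroup_G] H_subset add_subgroup_of_nat_mult[OF subgroup_G g_in_G]
  by (auto elim!: HgE)

lemma H_subset_Hg: "H \<subseteq> Hg"
  using HgI[of _ 0] period_pos by force

lemma g_in_Hg: "g \<in> Hg"
  using HgI[OF add_subgroup_zero[OF subgroup_H] period_gt_1] by simp

lemma Hg_add_repr:
  assumes "k1 < period" "k2 < period"
  shows "k1 + k2 < period \<Longrightarrow>
           (h1 + of_nat k1 * g) + (h2 + of_nat k2 * g) = (h1 + h2) + of_nat (k1 + k2) * g"
    and "\<not> k1 + k2 < period \<Longrightarrow>
           (h1 + of_nat k1 * g) + (h2 + of_nat k2 * g)
             = (h1 + h2 + of_nat period * g) + of_nat (k1 + k2 - period) * g"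
    and "k1 + k2 - period < period"
proof -
  show "(h1 + of_nat k1 * g) + (h2 + of_nat k2 * g) = (h1 + h2) + of_nat (k1 + k2) * g"
    by (simp add: algebra_simps)
  show "(h1 + of_nat k1 * g) + (h2 + of_nat k2 * g)
      = (h1 + h2 + of_nat period * g) + of_nat (k1 + k2 - period) * g" if "\<not> k1 + k2 < period"
    using that of_nat_diff_mult[of period "k1 + k2"] by (simp add: algebra_simps)
  show "k1 + k2 - period < period" using assms by simp
qed

lemma subgroup_Hg: "add_subgroup Hg"
  unfolding add_subgroup_def
proof (intro conjI ballI)
  show "0 \<in> Hg" using H_subset_Hg add_subgroup_zero[OF subgroup_H] by blast
next
  fix x y assume "x \<in> Hg" "y \<in> Hg"
  then obtain h1 k1 h2 k2 where r: "h1 \<in> H" "k1 < period" "x = h1 + of_nat k1 * g"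
    "h2 \<in> H" "k2 < period" "y = h2 + of_nat k2 * g" by (metis HgE)
  have H: "h1 + h2 \<in> H" "h1 + h2 + of_nat period * g \<in> H"
    using r add_subgroup_add[OF subgroup_H] period_mult_in_H by auto
  show "x + y \<in> Hg"
  proof (cases "k1 + k2 < period")
    case True
    then show ?thesis using Hg_add_repr(1)[OF r(2,5) True] r(3,6) HgI[OF H(1) True] by metis
  next
    case False
    then show ?thesis
      using Hg_add_repr(2)[OF r(2,5) False] Hg_add_repr(3)[OF r(2,5)] r(3,6) HgI[OF H(2)] by metis
  qed
next
  fix x assume "x \<in> Hg"
  then obtain h k where r: "h \<in> H" "k < period" "x = h + of_nat k * g" by (rule HgE)
  show "- x \<in> Hg"
  proof (cases "k = 0")
    case True then show ?thesis using r H_subset_Hg add_subgroup_uminus[OF subgroup_H] by auto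
  next
    case False
    have "- x = (- h - of_nat period * g) + of_nat (period - k) * g"
      using r(2,3) of_nat_diff_mult[of k period] by (simp add: algebra_simps)
    moreover have "- h - of_nat period * g \<in> H"
      using add_subgroup_diff[OF subgroup_H add_subgroup_uminus[OF subgroup_H r(1)] period_mult_in_H] .
    ultimately show ?thesis using HgI False period_pos by simp
  qed
qed

lemma finite_Hg: "finite Hg" and card_Hg: "card Hg = period * card H"
proof -
  have image: "Hg = (\<lambda>(h, k). h + of_nat k * g) ` (H \<times> {..<period})"
    unfolding Hg_def by auto
  have "inj_on (\<lambda>(h, k). h + of_nat k * g) (H \<times> {..<period})"
    by (rule inj_onI) (auto dest: Hg_repr_unique)
  then show "card Hg = period * card H"
    using card_image image by (fastforce simp: card_cartesian_product)
  show "finite Hg" using image finite_G H_subset finite_subset by fastforce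
qed

definition repr where
  "repr x = (SOME p. fst p \<in> H \<and> snd p < period \<and> x = fst p + of_nat (snd p) * g)"

lemma repr_eq:
  assumes "h \<in> H" "k < period"
  shows "repr (h + of_nat k * g) = (h, k)"
proof -
  let ?P = "\<lambda>p. fst p \<in> H \<and> snd p < period \<and> h + of_nat k * g = fst p + of_nat (snd p) * g"
  have "?P (repr (h + of_nat k * g))"
    unfolding repr_def by (rule someI[of ?P "(h, k)"]) (use assms in simp)
  then show ?thesis using Hg_repr_unique[OF _ assms(1) _ assms(2)] by (metis prod.collapse)
qed

definition extend :: "('b \<Rightarrow> complex) \<Rightarrow> complex \<Rightarrow> 'b \<Rightarrow> complex" where
  "extend \<chi> z = (\<lambda>x. if x \<in> Hg then \<chi> (fst (repr x)) * z ^ snd (repr x) else undefined)"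

lemma extend_eq: "h \<in> H \<Longrightarrow> k < period \<Longrightarrow> extend \<chi> z (h + of_nat k * g) = \<chi> h * z ^ k"
  unfolding extend_def using repr_eq HgI by simp

lemma char_extension_eq:
  assumes "\<psi> \<in> char_extensions Hg H \<chi>" "h \<in> H" "k < period"
  shows "\<psi> (h + of_nat k * g) = \<chi> h * \<psi> g ^ k"
proof -
  have \<psi>: "character Hg \<psi>" "\<forall>x\<in>H. \<psi> x = \<chi> x"
    using assms(1) unfolding char_extensions_def by auto
  have "of_nat k * g \<in> Hg" using add_subgroup_of_nat_mult[OF subgroup_Hg g_in_Hg] .
  then show ?thesis
    using character_add[OF \<psi>(1)] assms(2) H_subset_Hg \<psi>(2)
      character_of_nat_mult[OF \<psi>(1) subgroup_Hg g_in_Hg] by auto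
qed

lemma extend_add:
  assumes \<chi>: "character H \<chi>" and z: "z ^ period = \<chi> (of_nat period * g)"
    and "x \<in> Hg" "y \<in> Hg"
  shows "extend \<chi> z (x + y) = extend \<chi> z x * extend \<chi> z y"
proof -
  obtain h1 k1 h2 k2 where r: "h1 \<in> H" "k1 < period" "x = h1 + of_nat k1 * g"
    "h2 \<in> H" "k2 < period" "y = h2 + of_nat k2 * g" using assms(3,4) by (metis HgE)
  have H: "h1 + h2 \<in> H" "h1 + h2 + of_nat period * g \<in> H"
    using r add_subgroup_add[OF subgroup_H] period_mult_in_H by auto
  have \<chi>12: "\<chi> (h1 + h2) = \<chi> h1 * \<chi> h2" using character_add[OF \<chi> r(1,4)] .
  show ?thesis
  proof (cases "k1 + k2 < period")
    case True
    have "extend \<chi> z (x + y) = \<chi> (h1 + h2) * z ^ (k1 + k2)"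
      by (simp only: r(3,6) Hg_add_repr(1)[OF r(2,5) True] extend_eq[OF H(1) True])
    then show ?thesis using extend_eq[OF r(1,2)] extend_eq[OF r(4,5)] r(3,6) \<chi>12
      by (simp add: power_add)
  next
    case False
    have "extend \<chi> z (x + y) = \<chi> (h1 + h2 + of_nat period * g) * z ^ (k1 + k2 - period)"
      by (simp only: r(3,6) Hg_add_repr(2)[OF r(2,5) False]
          extend_eq[OF H(2) Hg_add_repr(3)[OF r(2,5)]])
    also have "\<dots> = \<chi> h1 * \<chi> h2 * (z ^ period * z ^ (k1 + k2 - period))"
      using character_add[OF \<chi> H(1) period_mult_in_H] \<chi>12 z by simp
    also have "\<dots> = \<chi> h1 * \<chi> h2 * z ^ (k1 + k2)"
      using False by (simp flip: power_add)
    finally show ?thesis using extend_eq[OF r(1,2)] extend_eq[OF r(4,5)] r(3,6)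
      by (simp add: power_add)
  qed
qed

lemma extend_char_extension:
  assumes \<chi>: "character H \<chi>" and z: "z ^ period = \<chi> (of_nat period * g)"
  shows "extend \<chi> z \<in> char_extensions Hg H \<chi>" and "extend \<chi> z g = z"
proof -
  have "cmod z ^ period = 1 ^ period"
    using z character_norm[OF \<chi> period_mult_in_H] by (metis norm_power power_one)
  then have norm_z: "cmod z = 1" using power_eq_imp_eq_base period_pos by (metis norm_ge_zero zero_le_one)
  show "extend \<chi> z g = z"
    using extend_eq[OF add_subgroup_zero[OF subgroup_H] period_gt_1, of \<chi> z]
      character_zero[OF \<chi> subgroup_H] by simp
  have "cmod (extend \<chi> z x) = 1" if "x \<in> Hg" for x
  proof -
    obtain h k where "h \<in> H" "k < period" "x = h + of_nat k * g" using \<open>x \<in> Hg\<close> by (rule HgE)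
    then show ?thesis
      using extend_eq[of h k \<chi> z] character_norm[OF \<chi>] norm_z by (simp add: norm_mult norm_power)
  qed
  moreover have "extend \<chi> z \<in> extensional Hg" unfolding extend_def extensional_def by simp
  moreover have "\<forall>x\<in>H. extend \<chi> z x = \<chi> x" using extend_eq[of _ 0] period_pos by force
  ultimately show "extend \<chi> z \<in> char_extensions Hg H \<chi>"
    using extend_add[OF \<chi> z] unfolding char_extensions_def character_def by simp
qed

lemma card_char_extensions_Hg:
  assumes \<chi>: "character H \<chi>"
  shows "finite (char_extensions Hg H \<chi>)" and "card (char_extensions Hg H \<chi>) = period"
proof -
  let ?E = "char_extensions Hg H \<chi>" and ?R = "{z::complex. z ^ period = \<chi> (of_nat period * g)}"
  have inj: "inj_on (\<lambda>\<psi>. \<psi> g) ?E"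
  proof (rule inj_onI)
    fix \<psi>1 \<psi>2 assume \<psi>: "\<psi>1 \<in> ?E" "\<psi>2 \<in> ?E" and "\<psi>1 g = \<psi>2 g"
    have "\<psi>1 \<in> extensional Hg" "\<psi>2 \<in> extensional Hg"
      using \<psi> unfolding char_extensions_def character_def by auto
    moreover have "\<psi>1 x = \<psi>2 x" if "x \<in> Hg" for x
      using that char_extension_eq[OF \<psi>(1)] char_extension_eq[OF \<psi>(2)] \<open>\<psi>1 g = \<psi>2 g\<close>
      by (auto elim!: HgE)
    ultimately show "\<psi>1 = \<psi>2" by (rule extensionalityI)
  qed
  have image: "(\<lambda>\<psi>. \<psi> g) ` ?E = ?R"
  proof (intro equalityI subsetI)
    fix z assume "z \<in> (\<lambda>\<psi>. \<psi> g) ` ?E"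
    then obtain \<psi> where "\<psi> \<in> ?E" "z = \<psi> g" by blast
    then show "z \<in> ?R"
      using character_of_nat_mult[OF _ subgroup_Hg g_in_Hg] period_mult_in_H
      unfolding char_extensions_def by auto
  next
    fix z assume "z \<in> ?R"
    then have z: "z ^ period = \<chi> (of_nat period * g)" by simp
    show "z \<in> (\<lambda>\<psi>. \<psi> g) ` ?E"
      using extend_char_extension[OF \<chi> z] by (metis image_eqI)
  qed
  have card_R: "card ?R = period"
    using card_nth_roots[OF character_nonzero[OF \<chi> period_mult_in_H] period_pos] .
  then have "finite ?R" using period_pos card_gt_0_iff by metis
  then show "finite ?E" using finite_imageD[OF _ inj] image by simp
  show "card ?E = period" using card_image[OF inj] image card_R by simp
qed

lemma char_extensions_UN_Hg:
  "char_extensions G H \<chi> = (\<Union>\<chi>'\<in>char_extensions Hg H \<chi>. char_extensions G Hg \<chi>')"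
proof (intro equalityI subsetI)
  fix \<psi> assume \<psi>: "\<psi> \<in> char_extensions G H \<chi>"
  then have "restrict \<psi> Hg \<in> char_extensions Hg H \<chi>"
    using character_restrict[OF _ Hg_subset subgroup_Hg] H_subset_Hg
    unfolding char_extensions_def by auto
  moreover have "\<psi> \<in> char_extensions G Hg (restrict \<psi> Hg)"
    using \<psi> unfolding char_extensions_def by simp
  ultimately show "\<psi> \<in> (\<Union>\<chi>'\<in>char_extensions Hg H \<chi>. char_extensions G Hg \<chi>')" by blast
qed (use H_subset_Hg in \<open>auto simp: char_extensions_def\<close>)

end

lemma char_extensions_disjoint:
  assumes "character K \<chi>1" "character K \<chi>2" "\<chi>1 \<noteq> \<chi>2"
  shows "char_extensions G K \<chi>1 \<inter> char_extensions G K \<chi>2 = {}"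
  using assms extensionalityI[of \<chi>1 K \<chi>2] unfolding char_extensions_def character_def by auto

lemma char_extensions_self: "character G \<chi> \<Longrightarrow> char_extensions G G \<chi> = {\<chi>}"
  unfolding char_extensions_def character_def by (auto intro: extensionalityI)

theorem card_char_extensions:
  fixes G H :: "'b::ring_1 set"
  assumes "add_subgroup G" "finite G" "add_subgroup H" "H \<subseteq> G" "character H \<chi>"
  shows "finite (char_extensions G H \<chi>)" and "card (char_extensions G H \<chi>) * card H = card G"
proof -
  have "finite (char_extensions G H \<chi>) \<and> card (char_extensions G H \<chi>) * card H = card G"
    using assms(3-5)
  proof (induction "card G - card H" arbitrary: H \<chi> rule: less_induct)
    case less
    show ?case
    proof (cases "H = G")
      case True
      then have "char_extensions G H \<chi> = {\<chi>}"
        using char_extensions_self less.prems(3) by simp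
      then show ?thesis using True by simp
    next
      case False
      then obtain g where "g \<in> G" "g \<notin> H" using less.prems(2) by blast
      then interpret A: subgroup_adjoin G H g using assms(1,2) less.prems by unfold_locales
      let ?E = "char_extensions A.Hg H \<chi>"
      have "card H < card A.Hg"
        using A.H_subset_Hg A.g_in_Hg \<open>g \<notin> H\<close> A.finite_Hg by (metis psubsetI psubset_card_mono)
      then have "card G - card A.Hg < card G - card H"
        using card_mono[OF assms(2) A.Hg_subset] by linarith
      then have IH: "finite (char_extensions G A.Hg \<chi>') \<and>
          card (char_extensions G A.Hg \<chi>') * card A.Hg = card G" if "\<chi>' \<in> ?E" for \<chi>'
        using less.hyps A.subgroup_Hg A.Hg_subset that unfolding char_extensions_def by blast
      have disjoint: "char_extensions G A.Hg \<chi>1 \<inter> char_extensions G A.Hg \<chi>2 = {}"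
        if "\<chi>1 \<in> ?E" "\<chi>2 \<in> ?E" "\<chi>1 \<noteq> \<chi>2" for \<chi>1 \<chi>2
        by (intro char_extensions_disjoint) (use that in \<open>auto simp: char_extensions_def\<close>)
      have "card (char_extensions G H \<chi>) = (\<Sum>\<chi>'\<in>?E. card (char_extensions G A.Hg \<chi>'))"
        unfolding A.char_extensions_UN_Hg
        by (rule card_UN_disjoint[OF A.card_char_extensions_Hg(1)[OF less.prems(3)]])
          (use IH disjoint in auto)
      then have "card (char_extensions G H \<chi>) * card A.Hg = (\<Sum>\<chi>'\<in>?E. card G)"
        using IH by (simp add: sum_distrib_right)
      also have "\<dots> = A.period * card G"
        using A.card_char_extensions_Hg(2)[OF less.prems(3)] by simp
      finally have "card (char_extensions G H \<chi>) * card H = card G"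
        using A.card_Hg A.period_pos by (simp add: mult.left_commute)
      moreover have "finite (char_extensions G H \<chi>)"
        using A.char_extensions_UN_Hg IH A.card_char_extensions_Hg(1)[OF less.prems(3)] by simp
      ultimately show ?thesis by blast
    qed
  qed
  then show "finite (char_extensions G H \<chi>)" "card (char_extensions G H \<chi>) * card H = card G"
    by blast+
qed

corollary card_characters_trivial_on:
  fixes G H :: "'b::ring_1 set"
  assumes "add_subgroup G" "finite G" "add_subgroup H" "H \<subseteq> G"
  shows "finite {\<psi>. character G \<psi> \<and> (\<forall>x\<in>H. \<psi> x = 1)}"
    and "card {\<psi>. character G \<psi> \<and> (\<forall>x\<in>H. \<psi> x = 1)} * card H = card G"
proof -
  have "character H (restrict (\<lambda>_. 1) H)"
    using add_subgroup_add[OF assms(3)] unfolding character_def by simp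
  moreover have "char_extensions G H (restrict (\<lambda>_. 1) H) = {\<psi>. character G \<psi> \<and> (\<forall>x\<in>H. \<psi> x = 1)}"
    unfolding char_extensions_def by auto
  ultimately show "finite {\<psi>. character G \<psi> \<and> (\<forall>x\<in>H. \<psi> x = 1)}"
    "card {\<psi>. character G \<psi> \<and> (\<forall>x\<in>H. \<psi> x = 1)} * card H = card G"
    using card_char_extensions[OF assms] by metis+
qed

corollary card_characters_UNIV:
  shows "finite {\<psi>. character (UNIV :: 'b::{finite,ring_1} set) \<psi>}"
    and "card {\<psi>. character (UNIV :: 'b set) \<psi>} = card (UNIV :: 'b set)"
proof -
  have UNIV: "add_subgroup (UNIV :: 'b set)" and zero: "add_subgroup {0 :: 'b}"
    unfolding add_subgroup_def by simp_all
  have "{\<psi>. character (UNIV :: 'b set) \<psi> \<and> (\<forall>x\<in>{0}. \<psi> x = 1)} = {\<psi>. character UNIV \<psi>}"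
    using character_zero[OF _ UNIV] by auto
  then show "finite {\<psi>. character (UNIV :: 'b set) \<psi>}"
    "card {\<psi>. character (UNIV :: 'b set) \<psi>} = card (UNIV :: 'b set)"
    using card_characters_trivial_on[OF UNIV finite_UNIV zero] by simp_all
qed
section \<open>The truncated polynomial ring\<close>

interpretation Rscale: vector_space "Rscale :: 'a::field \<Rightarrow> ((nat \<Rightarrow> nat) \<Rightarrow> 'a) \<Rightarrow> _"
  by unfold_locales (auto simp: Rscale_def fun_eq_iff algebra_simps)

definition unit_exp :: "nat \<Rightarrow> nat \<Rightarrow> nat" where
  "unit_exp i = (\<lambda>j. if j = i then 1 else 0)"

definition Rmonom :: "(nat \<Rightarrow> nat) \<Rightarrow> (nat \<Rightarrow> nat) \<Rightarrow> 'a::field" where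
  "Rmonom a = (\<lambda>e. if e = a then 1 else 0)"

lemma sum_fun_apply: "(\<Sum>a\<in>A. F a) x = (\<Sum>a\<in>A. F a x)"
  by (induction A rule: infinite_finite_induct) auto

lemma finite_Rmonos: "finite (Rmonos v n)"
proof -
  have "Rmonos v n \<subseteq> {e. \<forall>i. (i \<in> {..<v} \<longrightarrow> e i \<in> {..n}) \<and> (i \<notin> {..<v} \<longrightarrow> e i = 0)}"
  proof
    fix e assume e: "e \<in> Rmonos v n"
    have "e i \<le> n" if "i < v" for i
      using e that member_le_sum[of i "{..<v}" e] unfolding Rmonos_def by auto
    then show "e \<in> {e. \<forall>i. (i \<in> {..<v} \<longrightarrow> e i \<in> {..n}) \<and> (i \<notin> {..<v} \<longrightarrow> e i = 0)}"
      using e unfolding Rmonos_def by auto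
  qed
  moreover have "finite {e. \<forall>i. (i \<in> {..<v} \<longrightarrow> e i \<in> {..n}) \<and> (i \<notin> {..<v} \<longrightarrow> e i = (0::nat))}"
    by (rule finite_set_of_finite_funs) auto
  ultimately show ?thesis using finite_subset by blast
qed

lemma finite_Rcar: "finite (Rcar v n :: ((nat \<Rightarrow> nat) \<Rightarrow> 'a::{finite,field}) set)"
proof -
  have "Rcar v n = {f :: (nat \<Rightarrow> nat) \<Rightarrow> 'a.
          \<forall>e. (e \<in> Rmonos v n \<longrightarrow> f e \<in> UNIV) \<and> (e \<notin> Rmonos v n \<longrightarrow> f e = 0)}"
    unfolding Rcar_def by auto
  also have "finite \<dots>" by (rule finite_set_of_finite_funs) (auto simp: finite_Rmonos)
  finally show ?thesis .
qed

lemma add_subgroup_Rcar: "add_subgroup (Rcar v n)"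
  unfolding add_subgroup_def Rcar_def by auto

lemma Rscale_in_Rcar: "f \<in> Rcar v n \<Longrightarrow> Rscale c f \<in> Rcar v n"
  unfolding Rcar_def Rscale_def by auto

lemma zero_in_Rmonos: "n \<ge> 1 \<Longrightarrow> (\<lambda>_. 0) \<in> Rmonos v n"
  unfolding Rmonos_def by auto

lemma Rone_in_Rcar: "n \<ge> 1 \<Longrightarrow> Rone \<in> Rcar v n"
  unfolding Rone_def Rcar_def using zero_in_Rmonos by auto

lemma xvar_in_Rcar: "xvar v n i \<in> Rcar v n"
  unfolding xvar_def Rcar_def by auto

lemma Rmonom_in_Rcar: "a \<in> Rmonos v n \<Longrightarrow> Rmonom a \<in> Rcar v n"
  unfolding Rmonom_def Rcar_def by auto

lemma Rmonos_downward_closed: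
  assumes "e \<in> Rmonos v n" "a \<le> e"
  shows "a \<in> Rmonos v n"
proof -
  have "a i \<le> e i" for i using assms(2) by (simp add: le_fun_def)
  then have "(\<Sum>i<v. a i) \<le> (\<Sum>i<v. e i)" "\<forall>i\<ge>v. a i = 0"
    using assms(1) unfolding Rmonos_def by (auto intro: sum_mono, metis le_zero_eq)
  then show ?thesis using assms(1) unfolding Rmonos_def by simp
qed

lemma diff_in_Rmonos: "e \<in> Rmonos v n \<Longrightarrow> e - a \<in> Rmonos v n"
  by (rule Rmonos_downward_closed) (auto simp: le_fun_def)

lemma Rmult_commute: "Rmult v n f g = Rmult v n g f"
proof (rule ext)
  fix e
  let ?D = "{a \<in> Rmonos v n. a \<le> e}"
  have "(\<Sum>a\<in>?D. f a * g (e - a)) = (\<Sum>a\<in>?D. g a * f (e - a))" if e: "e \<in> Rmonos v n"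
  proof -
    have "e - (e - a) = a" "e - a \<in> ?D" if "a \<in> ?D" for a
      using that diff_in_Rmonos[OF e] by (auto simp: le_fun_def fun_eq_iff)
    then show ?thesis
      by (intro sum.reindex_bij_witness[where i = "\<lambda>a. e - a" and j = "\<lambda>a. e - a"])
        (auto simp: mult.commute)
  qed
  then show "Rmult v n f g e = Rmult v n g f e" unfolding Rmult_def by simp
qed

lemma Rmult_Rscale_left: "Rmult v n (Rscale c f) g = Rscale c (Rmult v n f g)"
  by (auto simp: Rmult_def Rscale_def fun_eq_iff sum_distrib_left mult.assoc)

lemma Rmult_Rscale_right: "Rmult v n f (Rscale c g) = Rscale c (Rmult v n f g)"
  using Rmult_Rscale_left Rmult_commute by metis

lemma Rmult_add_left: "Rmult v n (f1 + f2) g = Rmult v n f1 g + Rmult v n f2 g"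
  by (auto simp: Rmult_def fun_eq_iff sum.distrib distrib_right)

lemma Rmult_add_right: "Rmult v n g (f1 + f2) = Rmult v n g f1 + Rmult v n g f2"
  using Rmult_add_left Rmult_commute by metis

lemma Rmult_zero_left: "Rmult v n 0 g = 0"
  by (simp add: Rmult_def fun_eq_iff)

lemma Rmult_sum_left: "Rmult v n (\<Sum>a\<in>A. F a) g = (\<Sum>a\<in>A. Rmult v n (F a) g)"
proof (induction A rule: infinite_finite_induct)
  case (insert a A)
  then show ?case by (simp only: sum.insert[OF insert(1,2)] Rmult_add_left insert(3))
qed (metis sum.infinite sum.empty Rmult_zero_left)+

lemma Rmult_Rscale_Rone:
  assumes "n \<ge> 1" "f \<in> Rcar v n"
  shows "Rmult v n (Rscale c Rone) f = Rscale c f"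
proof (rule ext)
  fix e
  have "(\<Sum>a\<in>{a \<in> Rmonos v n. a \<le> e}. Rscale c Rone a * f (e - a)) = c * f e"
    if "e \<in> Rmonos v n"
  proof -
    have "(\<lambda>_. 0) \<in> {a \<in> Rmonos v n. a \<le> e}"
      using zero_in_Rmonos[OF assms(1)] by (simp add: le_fun_def)
    moreover have "finite {a \<in> Rmonos v n. a \<le> e}" using finite_Rmonos by simp
    moreover have "Rscale c Rone a * f (e - a) = (if a = (\<lambda>_. 0) then c * f e else 0)" for a
      by (simp add: Rscale_def Rone_def fun_diff_def)
    ultimately show ?thesis by (simp add: sum.delta')
  qed
  then show "Rmult v n (Rscale c Rone) f e = Rscale c f e"
    using assms(2) unfolding Rmult_def Rscale_def Rcar_def by auto
qed

lemma Rmult_Rone: "n \<ge> 1 \<Longrightarrow> f \<in> Rcar v n \<Longrightarrow> Rmult v n Rone f = f"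
  using Rmult_Rscale_Rone[of n f v 1] by (simp add: Rscale_def)

lemma Rmult_xvar:
  assumes "i < v"
  shows "Rmult v n (xvar v n i) g
           = (\<lambda>e. if e \<in> Rmonos v n \<and> 1 \<le> e i then g (e - unit_exp i) else 0)"
proof (rule ext)
  fix e
  have "unit_exp i \<le> e \<longleftrightarrow> 1 \<le> e i" unfolding unit_exp_def le_fun_def by auto
  moreover have "unit_exp i \<in> Rmonos v n" if "e \<in> Rmonos v n" "1 \<le> e i"
    using Rmonos_downward_closed that calculation by blast
  moreover have "(\<Sum>a\<in>{a \<in> Rmonos v n. a \<le> e}. xvar v n i a * g (e - a))
      = (\<Sum>a\<in>{a \<in> Rmonos v n. a \<le> e}. if a = unit_exp i then g (e - a) else 0)"
    by (rule sum.cong) (auto simp: xvar_def unit_exp_def)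
  ultimately show "Rmult v n (xvar v n i) g e
      = (if e \<in> Rmonos v n \<and> 1 \<le> e i then g (e - unit_exp i) else 0)"
    using finite_Rmonos unfolding Rmult_def by (auto simp: sum.delta)
qed

lemma Rmonom_eq_xvar_mult:
  assumes "a \<in> Rmonos v n" "i < v" "1 \<le> a i"
  shows "(Rmonom a :: _ \<Rightarrow> 'a::field) = Rmult v n (xvar v n i) (Rmonom (a - unit_exp i))"
proof -
  have "e \<in> Rmonos v n \<and> 1 \<le> e i \<and> e - unit_exp i = a - unit_exp i \<longleftrightarrow> e = a" for e
  proof
    assume e: "e \<in> Rmonos v n \<and> 1 \<le> e i \<and> e - unit_exp i = a - unit_exp i"
    show "e = a"
    proof
      fix j
      have "e j - unit_exp i j = a j - unit_exp i j" using e by (metis fun_diff_def)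
      then show "e j = a j" using e assms(3) unfolding unit_exp_def by (cases "j = i") auto
    qed
  qed (use assms in auto)
  then show ?thesis unfolding Rmult_xvar[OF assms(2)] Rmonom_def by (auto simp: fun_eq_iff)
qed

lemma Rmult_xvar_vanishes:
  assumes "i < v" and "\<forall>e. (\<Sum>j<v. e j) < d \<longrightarrow> h e = 0"
  shows "\<forall>e. (\<Sum>j<v. e j) < Suc d \<longrightarrow> Rmult v n (xvar v n i) h e = 0"
proof (intro allI impI)
  fix e assume e: "(\<Sum>j<v. e j) < Suc d"
  have "(\<Sum>j<v. (e - unit_exp i) j) + 1 = (\<Sum>j<v. e j)" if "1 \<le> e i"
  proof -
    have "(\<Sum>j<v. e j) = (\<Sum>j<v. (e - unit_exp i) j + unit_exp i j)"
      using that by (intro sum.cong) (auto simp: unit_exp_def)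
    then show ?thesis using assms(1) by (simp add: sum.distrib unit_exp_def)
  qed
  then show "Rmult v n (xvar v n i) h e = 0"
    using assms(2) e unfolding Rmult_xvar[OF assms(1)] by auto
qed

lemma Rcar_monom_expansion:
  assumes "f \<in> Rcar v n"
  shows "f = (\<Sum>a\<in>Rmonos v n. Rscale (f a) (Rmonom a))"
proof (rule ext)
  fix e
  have "(\<Sum>a\<in>Rmonos v n. Rscale (f a) (Rmonom a)) e = (\<Sum>a\<in>Rmonos v n. if a = e then f e else 0)"
    unfolding sum_fun_apply by (rule sum.cong) (auto simp: Rscale_def Rmonom_def)
  also have "\<dots> = f e" using finite_Rmonos assms unfolding Rcar_def by (auto simp: sum.delta')
  finally show "f e = (\<Sum>a\<in>Rmonos v n. Rscale (f a) (Rmonom a)) e" by simp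
qed
lemma Rmonom_zero: "Rmonom (\<lambda>_. 0) = Rone"
  unfolding Rmonom_def Rone_def by simp

lemma subspace_add_subgroup: "Rscale.subspace W \<Longrightarrow> add_subgroup W"
  unfolding add_subgroup_def using Rscale.subspace_0 Rscale.subspace_add Rscale.subspace_neg by blast

lemma subspace_Rcar: "Rscale.subspace (Rcar v n)"
  unfolding Rscale.subspace_def Rcar_def Rscale_def by auto

lemma ideal_Rring_subset: "ideal J (Rring v n) \<Longrightarrow> J \<subseteq> Rcar v n"
  using additive_subgroup.a_subset[of J "Rring v n"] unfolding ideal_def by (simp add: Rring_def)

lemma ideal_Rring_Rmult: "ideal J (Rring v n) \<Longrightarrow> x \<in> J \<Longrightarrow> r \<in> Rcar v n \<Longrightarrow> Rmult v n r x \<in> J"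
  using ideal.I_l_closed[of J "Rring v n" x r] by (simp add: Rring_def)

lemma ideal_Rring_Rscale:
  assumes "n \<ge> 1" "ideal J (Rring v n)" "x \<in> J"
  shows "Rscale c x \<in> J"
proof -
  have "Rmult v n (Rscale c Rone) x \<in> J"
    using ideal_Rring_Rmult[OF assms(2,3) Rscale_in_Rcar[OF Rone_in_Rcar[OF assms(1)]]] .
  moreover have "x \<in> Rcar v n" using ideal_Rring_subset[OF assms(2)] assms(3) by blast
  ultimately show ?thesis using Rmult_Rscale_Rone[OF assms(1), where c = c] by metis
qed

lemma ideal_Rring_subspace:
  assumes "n \<ge> 1" "ideal J (Rring v n)"
  shows "Rscale.subspace J"
proof -
  have "\<zero>\<^bsub>Rring v n\<^esub> \<in> J"
    using assms(2) additive_subgroup.zero_closed[of J "Rring v n"] unfolding ideal_def by blast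
  moreover have "x \<oplus>\<^bsub>Rring v n\<^esub> y \<in> J" if "x \<in> J" "y \<in> J" for x y
    using assms(2) that additive_subgroup.a_closed[of J "Rring v n"] unfolding ideal_def by blast
  ultimately show ?thesis unfolding Rscale.subspace_def
    using ideal_Rring_Rscale[OF assms] by (auto simp: Rring_def zero_fun_def)
qed

text \<open>Associativity of \<open>Rmult\<close> is never proved from the definition: it is read off from
  the ring axioms, which are part of any hypothesis \<open>ideal I (Rring v n)\<close>.\<close>

lemma Rmult_assoc:
  fixes r s t :: "(nat \<Rightarrow> nat) \<Rightarrow> 'a::field"
  assumes "ring (Rring v n :: ((nat \<Rightarrow> nat) \<Rightarrow> 'a) ring)"
    and "r \<in> Rcar v n" "s \<in> Rcar v n" "t \<in> Rcar v n"
  shows "Rmult v n (Rmult v n r s) t = Rmult v n r (Rmult v n s t)"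
proof -
  interpret R: ring "Rring v n :: ((nat \<Rightarrow> nat) \<Rightarrow> 'a) ring" by (rule assms(1))
  show ?thesis using R.m_assoc[of r s t] assms(2-4) by (simp add: Rring_def)
qed

lemma ideal_RringI:
  fixes J :: "((nat \<Rightarrow> nat) \<Rightarrow> 'a::field) set"
  assumes "ring (Rring v n :: ((nat \<Rightarrow> nat) \<Rightarrow> 'a) ring)" "Rscale.subspace J" "J \<subseteq> Rcar v n"
    and "\<And>r x. r \<in> Rcar v n \<Longrightarrow> x \<in> J \<Longrightarrow> Rmult v n r x \<in> J"
  shows "ideal J (Rring v n)"
proof -
  interpret R: ring "Rring v n :: ((nat \<Rightarrow> nat) \<Rightarrow> 'a) ring" by (rule assms(1))
  have "\<ominus>\<^bsub>Rring v n\<^esub> x = - x" if "x \<in> J" for x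
    using R.minus_equality[of "- x" x] that assms(3) add_subgroup_uminus[OF add_subgroup_Rcar]
    by (auto simp: Rring_def zero_fun_def)
  then have "subgroup J (add_monoid (Rring v n))"
    using assms(2,3) Rscale.subspace_0 Rscale.subspace_add Rscale.subspace_neg
    by (intro group.subgroupI[OF R.a_group]) (auto simp: Rring_def a_inv_def)
  moreover have "Rmult v n a r \<in> J" if "a \<in> J" "r \<in> Rcar v n" for a r
    using assms(4)[OF that(2,1)] by (simp add: Rmult_commute)
  ultimately show ?thesis
    using assms(4) by (intro idealI[OF assms(1)]) (auto simp: Rring_def)
qed

section \<open>Ideals inside kernels of characters\<close>

locale Rring_ideal =
  fixes v n :: nat and I :: "((nat \<Rightarrow> nat) \<Rightarrow> 'a::field) set"
  assumes n_ge_1: "n \<ge> 1" and ideal_I: "ideal I (Rring v n)"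
begin

abbreviation S :: "((nat \<Rightarrow> nat) \<Rightarrow> 'a) set" where "S \<equiv> soc_pre v n I"

lemma ring_Rring: "ring (Rring v n :: ((nat \<Rightarrow> nat) \<Rightarrow> 'a) ring)"
  using ideal_I unfolding ideal_def by blast

lemma I_subset: "I \<subseteq> Rcar v n"
  by (rule ideal_Rring_subset[OF ideal_I])

lemma subspace_I: "Rscale.subspace I"
  by (rule ideal_Rring_subspace[OF n_ge_1 ideal_I])

lemma soc_pre_subset: "S \<subseteq> Rcar v n"
  unfolding soc_pre_def by blast

lemma I_subset_soc_pre: "I \<subseteq> S"
  unfolding soc_pre_def using I_subset ideal_Rring_Rmult[OF ideal_I] xvar_in_Rcar by blast

lemma subspace_soc_pre: "Rscale.subspace S"
  using subspace_I Rscale.subspace_0[OF subspace_I] I_subset_soc_pre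
    Rscale.subspace_add[OF subspace_I] Rscale.subspace_scale[OF subspace_I]
    Rscale.subspace_add[OF subspace_Rcar] Rscale.subspace_scale[OF subspace_Rcar]
  unfolding Rscale.subspace_def soc_pre_def by (auto simp: Rmult_add_right Rmult_Rscale_right)

lemma Rmonom_mult_soc_pre:
  assumes f: "f \<in> S" and a: "a \<in> Rmonos v n" "a \<noteq> (\<lambda>_. 0)"
  shows "Rmult v n (Rmonom a) f \<in> I"
proof -
  have "\<exists>i<v. a i \<noteq> 0"
  proof (rule ccontr)
    assume "\<not> (\<exists>i<v. a i \<noteq> 0)"
    then have "a = (\<lambda>_. 0)" using a(1) unfolding Rmonos_def by (auto simp: fun_eq_iff not_less)
    then show False using a(2) by blast
  qed
  then obtain i where i: "i < v" "1 \<le> a i" by (auto simp: Suc_le_eq)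
  have b: "a - unit_exp i \<in> Rmonos v n" using diff_in_Rmonos[OF a(1)] .
  have "Rmult v n (Rmonom a) f = Rmult v n (Rmult v n (Rmonom (a - unit_exp i)) (xvar v n i)) f"
    using Rmonom_eq_xvar_mult[OF a(1) i] Rmult_commute by metis
  also have "\<dots> = Rmult v n (Rmonom (a - unit_exp i)) (Rmult v n (xvar v n i) f)"
    using Rmult_assoc[OF ring_Rring Rmonom_in_Rcar[OF b] xvar_in_Rcar] f soc_pre_subset by blast
  finally show ?thesis
    using f i(1) ideal_Rring_Rmult[OF ideal_I _ Rmonom_in_Rcar[OF b]] unfolding soc_pre_def by auto
qed

text \<open>\<open>R\<close> is local with maximal ideal \<open>(x\<^sub>1, \<dots>, x\<^sub>v)\<close>, which annihilates \<open>Soc(R/I)\<close>;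
  so \<open>R\<close> acts on the socle through its constant term.\<close>

lemma Rmult_soc_pre:
  assumes f: "f \<in> S" and r: "r \<in> Rcar v n"
  shows "Rmult v n r f - Rscale (r (\<lambda>_. 0)) f \<in> I"
proof -
  let ?M = "Rmonos v n" and ?P = "\<lambda>a. Rscale (r a) (Rmult v n (Rmonom a) f)"
  have "f \<in> Rcar v n" using f soc_pre_subset by blast
  have "Rmult v n r f = Rmult v n (\<Sum>a\<in>?M. Rscale (r a) (Rmonom a)) f"
    using Rcar_monom_expansion[OF r] by (rule arg_cong)
  also have "\<dots> = (\<Sum>a\<in>?M. ?P a)"
    by (simp add: Rmult_sum_left Rmult_Rscale_left)
  also have "\<dots> = ?P (\<lambda>_. 0) + (\<Sum>a\<in>?M - {\<lambda>_. 0}. ?P a)"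
    by (rule sum.remove[OF finite_Rmonos zero_in_Rmonos[OF n_ge_1]])
  also have "?P (\<lambda>_. 0) = Rscale (r (\<lambda>_. 0)) f"
    by (simp only: Rmonom_zero Rmult_Rone[OF n_ge_1 \<open>f \<in> Rcar v n\<close>])
  finally have expansion: "Rmult v n r f = Rscale (r (\<lambda>_. 0)) f + (\<Sum>a\<in>?M - {\<lambda>_. 0}. ?P a)" .
  have "Rmult v n r f - Rscale (r (\<lambda>_. 0)) f = (\<Sum>a\<in>?M - {\<lambda>_. 0}. ?P a)"
    by (subst expansion) (rule add_diff_cancel_left')
  also have "\<dots> \<in> I"
    using Rmonom_mult_soc_pre[OF f] Rscale.subspace_scale[OF subspace_I]
    by (intro Rscale.subspace_sum[OF subspace_I]) auto
  finally show ?thesis .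
qed

lemma span_insert_I: "Rscale.span (insert f I) = {x. \<exists>c. x - Rscale c f \<in> I}"
  using Rscale.span_breakdown_eq[of _ f I]
  unfolding Rscale.span_eq_iff[THEN iffD2, OF subspace_I] by blast

lemma ideal_span_insert_soc_pre:
  assumes f: "f \<in> S"
  shows "ideal (Rscale.span (insert f I)) (Rring v n)"
proof (rule ideal_RringI[OF ring_Rring Rscale.subspace_span])
  show "Rscale.span (insert f I) \<subseteq> Rcar v n"
    using Rscale.span_minimal[OF _ subspace_Rcar] I_subset f soc_pre_subset by blast
next
  fix r x :: "(nat \<Rightarrow> nat) \<Rightarrow> 'a"
  assume r: "r \<in> Rcar v n" and "x \<in> Rscale.span (insert f I)"
  then obtain c where x: "x - Rscale c f \<in> I" using span_insert_I by blast
  have "Rmult v n r x = Rmult v n r (x - Rscale c f) + Rscale c (Rmult v n r f)"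
    by (simp add: Rmult_add_right[symmetric] Rmult_Rscale_right[symmetric])
  also have "\<dots> = (Rmult v n r (x - Rscale c f)
                    + Rscale c (Rmult v n r f - Rscale (r (\<lambda>_. 0)) f))
                  + Rscale (c * r (\<lambda>_. 0)) f"
    by (simp add: Rscale_def fun_eq_iff algebra_simps)
  finally have "Rmult v n r x - Rscale (c * r (\<lambda>_. 0)) f \<in> I"
    using Rscale.subspace_add[OF subspace_I] Rscale.subspace_scale[OF subspace_I]
      ideal_Rring_Rmult[OF ideal_I x r] Rmult_soc_pre[OF f r] by simp
  then show "Rmult v n r x \<in> Rscale.span (insert f I)" using span_insert_I by blast
qed

lemma ideal_meets_soc_pre:
  assumes J: "ideal J (Rring v n)" and "g \<in> J" "g \<notin> I"
  shows "\<exists>f\<in>J. f \<in> S \<and> f \<notin> I"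
proof -
  have "\<exists>f\<in>J. f \<in> S \<and> f \<notin> I"
    if "h \<in> J" "h \<notin> I" "\<forall>e. (\<Sum>i<v. e i) < n - k \<longrightarrow> h e = 0" for h k
    using that
  proof (induction k arbitrary: h)
    case 0
    then have "h = 0"
      using ideal_Rring_subset[OF J] unfolding Rcar_def Rmonos_def by (auto simp: fun_eq_iff)
    then show ?case using 0(2) Rscale.subspace_0[OF subspace_I] by blast
  next
    case (Suc k)
    show ?case
    proof (cases "h \<in> S")
      case False
      then obtain i where i: "i < v" "Rmult v n (xvar v n i) h \<notin> I"
        using Suc.prems(1) ideal_Rring_subset[OF J] unfolding soc_pre_def by blast
      moreover have "Rmult v n (xvar v n i) h \<in> J"
        using ideal_Rring_Rmult[OF J Suc.prems(1) xvar_in_Rcar] .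
      moreover have "\<forall>e. (\<Sum>j<v. e j) < n - k \<longrightarrow> Rmult v n (xvar v n i) h e = 0"
        using Rmult_xvar_vanishes[OF i(1) Suc.prems(3)] by simp
      ultimately show ?thesis using Suc.IH by blast
    qed (use Suc.prems in blast)
  qed
  from this[OF assms(2,3), of n] show ?thesis by simp
qed

definition socle_faithful :: "(((nat \<Rightarrow> nat) \<Rightarrow> 'a) \<Rightarrow> complex) \<Rightarrow> bool" where
  "socle_faithful \<psi> \<longleftrightarrow> (\<forall>f\<in>S. (\<forall>c. \<psi> (Rscale c f) = 1) \<longrightarrow> f \<in> I)"

lemma socle_faithful_diff_in_I:
  assumes \<psi>: "character (Rcar v n) \<psi>" "socle_faithful \<psi>" and "f \<in> S" "f' \<in> S"
    and same: "\<forall>c. \<psi> (Rscale c f) = \<psi> (Rscale c f')"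
  shows "f - f' \<in> I"
proof -
  have fR: "Rscale c f \<in> Rcar v n" "Rscale c f' \<in> Rcar v n" for c
    using assms(3,4) soc_pre_subset Rscale_in_Rcar by blast+
  have "Rscale c (f - f') = Rscale c f - Rscale c f'" for c
    by (simp add: Rscale_def fun_eq_iff algebra_simps)
  then have "\<psi> (Rscale c (f - f')) = 1" for c
    using character_diff[OF \<psi>(1) add_subgroup_Rcar fR] same character_nonzero[OF \<psi>(1) fR(2)]
    by simp
  then show ?thesis
    using \<psi>(2) Rscale.subspace_diff[OF subspace_soc_pre assms(3,4)]
    unfolding socle_faithful_def by blast
qed

lemma character_trivial_on_span_insert:
  assumes \<psi>: "character (Rcar v n) \<psi>" "\<forall>x\<in>I. \<psi> x = 1" and f: "f \<in> Rcar v n"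
  shows "(\<forall>x\<in>Rscale.span (insert f I). \<psi> x = 1) \<longleftrightarrow> (\<forall>c. \<psi> (Rscale c f) = 1)"
proof
  assume "\<forall>x\<in>Rscale.span (insert f I). \<psi> x = 1"
  moreover have "Rscale c f \<in> Rscale.span (insert f I)" for c
    by (intro Rscale.span_scale Rscale.span_base) simp
  ultimately show "\<forall>c. \<psi> (Rscale c f) = 1" by blast
next
  assume c: "\<forall>c. \<psi> (Rscale c f) = 1"
  show "\<forall>x\<in>Rscale.span (insert f I). \<psi> x = 1"
  proof
    fix x assume "x \<in> Rscale.span (insert f I)"
    then obtain c where x: "x - Rscale c f \<in> I" using span_insert_I by blast
    have "\<psi> x = \<psi> ((x - Rscale c f) + Rscale c f)" by simp
    also have "\<dots> = \<psi> (x - Rscale c f) * \<psi> (Rscale c f)"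
      using character_add[OF \<psi>(1)] x I_subset Rscale_in_Rcar[OF f] by blast
    finally show "\<psi> x = 1" using x \<psi>(2) c by simp
  qed
qed

theorem maximal_ideal_in_kernel_iff:
  assumes \<psi>: "character (Rcar v n) \<psi>" "\<forall>x\<in>I. \<psi> x = 1"
  shows "(\<forall>J. ideal J (Rring v n) \<and> J \<subseteq> char_ker v n \<psi> \<longrightarrow> J \<subseteq> I) \<longleftrightarrow> socle_faithful \<psi>"
proof
  assume max: "\<forall>J. ideal J (Rring v n) \<and> J \<subseteq> char_ker v n \<psi> \<longrightarrow> J \<subseteq> I"
  show "socle_faithful \<psi>" unfolding socle_faithful_def
  proof (intro ballI impI)
    fix f assume f: "f \<in> S" and c: "\<forall>c. \<psi> (Rscale c f) = 1"
    have "Rscale.span (insert f I) \<subseteq> char_ker v n \<psi>"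
      using character_trivial_on_span_insert[OF \<psi>] c f soc_pre_subset
        ideal_Rring_subset[OF ideal_span_insert_soc_pre[OF f]]
      unfolding char_ker_def by blast
    then have "Rscale.span (insert f I) \<subseteq> I" using max ideal_span_insert_soc_pre[OF f] by blast
    moreover have "f \<in> Rscale.span (insert f I)" by (rule Rscale.span_base) simp
    ultimately show "f \<in> I" by blast
  qed
next
  assume faithful: "socle_faithful \<psi>"
  show "\<forall>J. ideal J (Rring v n) \<and> J \<subseteq> char_ker v n \<psi> \<longrightarrow> J \<subseteq> I"
  proof (intro allI impI subsetI)
    fix J g assume J: "ideal J (Rring v n) \<and> J \<subseteq> char_ker v n \<psi>" and "g \<in> J"
    show "g \<in> I"
    proof (rule ccontr)
      assume "g \<notin> I"
      then obtain f where f: "f \<in> J" "f \<in> S" "f \<notin> I"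
        using ideal_meets_soc_pre J \<open>g \<in> J\<close> by blast
      have "Rscale c f \<in> J" for c using ideal_Rring_Rscale[OF n_ge_1 _ f(1)] J by blast
      then have "\<psi> (Rscale c f) = 1" for c using J unfolding char_ker_def by blast
      then show False using faithful f unfolding socle_faithful_def by blast
    qed
  qed
qed

end

section \<open>Counting\<close>

locale finite_Rring_ideal = Rring_ideal v n I
  for v n and I :: "((nat \<Rightarrow> nat) \<Rightarrow> 'a::{finite,field}) set"
begin

abbreviation chars_trivial_on :: "((nat \<Rightarrow> nat) \<Rightarrow> 'a) set \<Rightarrow> (((nat \<Rightarrow> nat) \<Rightarrow> 'a) \<Rightarrow> complex) set"
  where "chars_trivial_on W \<equiv> {\<psi>. character (Rcar v n) \<psi> \<and> (\<forall>x\<in>W. \<psi> x = 1)}"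

lemma finite_I: "finite I"
  using I_subset finite_Rcar finite_subset by blast

lemma finite_soc_pre: "finite S"
  using soc_pre_subset finite_Rcar finite_subset by blast

lemma card_I_pos: "0 < card I"
  using finite_I Rscale.subspace_0[OF subspace_I] card_gt_0_iff by blast

lemma card_soc_pre: "card S = card (UNIV :: 'a set) ^ socle_dim v n I * card I"
  using Rscale.card_subspace_subset[OF finite_UNIV finite_soc_pre subspace_I subspace_soc_pre
      I_subset_soc_pre]
  unfolding socle_dim_def by simp

lemma card_chars_trivial_on:
  assumes "Rscale.subspace W" "W \<subseteq> Rcar v n"
  shows "real (card (chars_trivial_on W)) = real (card (Rcar v n :: ((nat \<Rightarrow> nat) \<Rightarrow> 'a) set)) / real (card W)"
proof -
  have "card W \<noteq> 0"
    using Rscale.subspace_0[OF assms(1)] finite_subset[OF assms(2) finite_Rcar] by auto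
  then show ?thesis
    using card_characters_trivial_on(2)[OF add_subgroup_Rcar finite_Rcar
        subspace_add_subgroup[OF assms(1)] assms(2)]
    by (simp add: field_simps flip: of_nat_mult)
qed

lemma counted_characters_eq:
  "{\<psi>. add_char v n \<psi> \<and> I \<subseteq> char_ker v n \<psi> \<and>
        (\<forall>J. ideal J (Rring v n) \<and> J \<subseteq> char_ker v n \<psi> \<longrightarrow> J \<subseteq> I)}
    = {\<psi> \<in> chars_trivial_on I. socle_faithful \<psi>}"
proof (rule Collect_cong)
  fix \<psi> :: "((nat \<Rightarrow> nat) \<Rightarrow> 'a) \<Rightarrow> complex"
  have "add_char v n \<psi> \<longleftrightarrow> character (Rcar v n) \<psi>"
    unfolding add_char_def character_def by simp
  moreover have "I \<subseteq> char_ker v n \<psi> \<longleftrightarrow> (\<forall>x\<in>I. \<psi> x = 1)"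
    unfolding char_ker_def using I_subset by blast
  ultimately show "add_char v n \<psi> \<and> I \<subseteq> char_ker v n \<psi> \<and>
        (\<forall>J. ideal J (Rring v n) \<and> J \<subseteq> char_ker v n \<psi> \<longrightarrow> J \<subseteq> I)
      \<longleftrightarrow> \<psi> \<in> chars_trivial_on I \<and> socle_faithful \<psi>"
    using maximal_ideal_in_kernel_iff[of \<psi>] by auto
qed

lemma span_insert_eq_soc_pre:
  assumes "socle_dim v n I = 1" "f \<in> S" "f \<notin> I"
  shows "Rscale.span (insert f I) = S"
proof -
  let ?L = "Rscale.span (insert f I)"
  have L_subset: "?L \<subseteq> S"
    using Rscale.span_minimal[OF _ subspace_soc_pre] I_subset_soc_pre assms(2) by blast
  have "I \<subset> ?L" using Rscale.span_superset[of "insert f I"] assms(3) by blast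
  then have "Rscale.dim I < Rscale.dim ?L"
    using finite_subset[OF L_subset finite_soc_pre]
    by (intro Rscale.dim_psubset_subspace[OF finite_UNIV _ subspace_I]) auto
  moreover have "Rscale.dim ?L \<le> Rscale.dim S" "card S = card (UNIV :: 'a set) ^ (Rscale.dim S - Rscale.dim ?L) * card ?L"
    using Rscale.card_subspace_subset[OF finite_UNIV finite_soc_pre _ subspace_soc_pre L_subset]
    by auto
  ultimately have "card ?L = card S" using assms(1) unfolding socle_dim_def by simp
  then show ?thesis using card_subset_eq[OF finite_soc_pre L_subset] by blast
qed

lemma socle_faithful_iff_nontrivial_on_soc_pre:
  assumes "socle_dim v n I = 1" and \<psi>: "\<psi> \<in> chars_trivial_on I"
  shows "socle_faithful \<psi> \<longleftrightarrow> \<psi> \<notin> chars_trivial_on S"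
proof
  have "2 \<le> card (UNIV :: 'a set)" by (rule two_le_card_field[OF finite_UNIV])
  then have "card I < card S" using card_soc_pre assms(1) card_I_pos by simp
  then have "\<not> S \<subseteq> I" using card_mono[OF finite_I] by (meson not_le)
  then obtain f0 where "f0 \<in> S" "f0 \<notin> I" by blast
  moreover assume "socle_faithful \<psi>"
  ultimately have "\<exists>c. \<psi> (Rscale c f0) \<noteq> 1" unfolding socle_faithful_def by blast
  then show "\<psi> \<notin> chars_trivial_on S"
    using Rscale.subspace_scale[OF subspace_soc_pre \<open>f0 \<in> S\<close>] by auto
next
  assume nontrivial: "\<psi> \<notin> chars_trivial_on S"
  show "socle_faithful \<psi>" unfolding socle_faithful_def
  proof (intro ballI impI)
    fix f assume f: "f \<in> S" and c: "\<forall>c. \<psi> (Rscale c f) = 1"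
    show "f \<in> I"
    proof (rule ccontr)
      assume "f \<notin> I"
      have "character (Rcar v n) \<psi>" "\<forall>x\<in>I. \<psi> x = 1" "f \<in> Rcar v n"
        using \<psi> f soc_pre_subset by auto
      then have "\<forall>x\<in>Rscale.span (insert f I). \<psi> x = 1"
        using character_trivial_on_span_insert c by blast
      then show False
        using nontrivial \<psi> span_insert_eq_soc_pre[OF assms(1) f \<open>f \<notin> I\<close>] by simp
    qed
  qed
qed

text \<open>Pigeonhole: a faithful \<open>\<psi>\<close> forces each fibre of \<open>f \<mapsto> (c \<mapsto> \<psi> (c f))\<close> to be a
  translate of a subset of \<open>I\<close>.\<close>

lemma card_soc_pre_le_if_socle_faithful:
  assumes \<psi>: "character (Rcar v n) \<psi>" and faithful: "socle_faithful \<psi>"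
  shows "card S \<le> card (UNIV :: 'a set) * card I"
proof -
  let ?X = "{\<chi>. character (UNIV :: 'a set) \<chi>}"
  define \<Phi> where "\<Phi> f = (\<lambda>c. \<psi> (Rscale c f))" for f
  define fibre where "fibre \<chi> = {f \<in> S. \<Phi> f = \<chi>}" for \<chi>
  have "\<Phi> f \<in> ?X" if "f \<in> S" for f
  proof -
    have f: "f \<in> Rcar v n" using that soc_pre_subset by blast
    have "Rscale (c + d) f = Rscale c f + Rscale d f" for c d
      by (simp add: Rscale_def fun_eq_iff algebra_simps)
    then show ?thesis
      using character_norm[OF \<psi> Rscale_in_Rcar[OF f]]
        character_add[OF \<psi> Rscale_in_Rcar[OF f] Rscale_in_Rcar[OF f]]
      unfolding \<Phi>_def character_def by simp
  qed
  then have S_eq: "S = (\<Union>\<chi>\<in>?X. fibre \<chi>)" unfolding fibre_def by blast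
  have fibre_le: "card (fibre \<chi>) \<le> card I" for \<chi>
  proof (cases "fibre \<chi> = {}")
    case False
    then obtain f1 where f1: "f1 \<in> fibre \<chi>" by blast
    have "f - f1 \<in> I" if "f \<in> fibre \<chi>" for f
    proof -
      have "f \<in> S" "f1 \<in> S" "\<Phi> f = \<Phi> f1" using that f1 unfolding fibre_def by auto
      then show ?thesis
        using socle_faithful_diff_in_I[OF \<psi> faithful] unfolding \<Phi>_def by meson
    qed
    then have "(\<lambda>f. f - f1) ` fibre \<chi> \<subseteq> I" by blast
    moreover have "inj_on (\<lambda>f. f - f1) (fibre \<chi>)" by (rule inj_onI) simp
    ultimately show ?thesis using card_inj_on_le finite_I by blast
  qed simp
  have "card S \<le> (\<Sum>\<chi>\<in>?X. card (fibre \<chi>))"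
    unfolding S_eq by (rule card_UN_le[OF card_characters_UNIV(1)])
  also have "\<dots> \<le> (\<Sum>\<chi>\<in>?X. card I)" by (rule sum_mono) (rule fibre_le)
  also have "\<dots> = card (UNIV :: 'a set) * card I" using card_characters_UNIV(2)[where 'b = 'a] by simp
  finally show ?thesis .
qed

lemma socle_faithful_socle_dim_0:
  assumes "socle_dim v n I = 0"
  shows "{\<psi> \<in> chars_trivial_on I. socle_faithful \<psi>} = chars_trivial_on I"
proof -
  have "S = I"
    using card_soc_pre assms card_subset_eq[OF finite_soc_pre I_subset_soc_pre] by simp
  then show ?thesis unfolding socle_faithful_def by auto
qed

lemma card_socle_faithful_socle_dim_1:
  assumes "socle_dim v n I = 1"
  shows "real (card {\<psi> \<in> chars_trivial_on I. socle_faithful \<psi>})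
    = real (card (Rcar v n :: ((nat \<Rightarrow> nat) \<Rightarrow> 'a) set)) / real (card I)
      * (1 - 1 / real (card (UNIV :: 'a set)))"
proof -
  have subset: "chars_trivial_on S \<subseteq> chars_trivial_on I" using I_subset_soc_pre by blast
  have "{\<psi> \<in> chars_trivial_on I. socle_faithful \<psi>} = chars_trivial_on I - chars_trivial_on S"
    using socle_faithful_iff_nontrivial_on_soc_pre[OF assms] by blast
  moreover have "finite (chars_trivial_on I)"
    using card_characters_trivial_on(1)[OF add_subgroup_Rcar finite_Rcar
        subspace_add_subgroup[OF subspace_I] I_subset] .
  ultimately have "real (card {\<psi> \<in> chars_trivial_on I. socle_faithful \<psi>})
      = real (card (chars_trivial_on I)) - real (card (chars_trivial_on S))"
    using card_Diff_subset[OF finite_subset[OF subset] subset] card_mono[OF _ subset] by simp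
  also have "\<dots> = real (card (Rcar v n :: ((nat \<Rightarrow> nat) \<Rightarrow> 'a) set)) / real (card I)
      - real (card (Rcar v n :: ((nat \<Rightarrow> nat) \<Rightarrow> 'a) set)) / real (card S)"
    using card_chars_trivial_on subspace_I I_subset subspace_soc_pre soc_pre_subset by simp
  finally show ?thesis
    using card_soc_pre assms card_I_pos by (simp add: field_simps)
qed

lemma no_socle_faithful_socle_dim_ge_2:
  assumes "socle_dim v n I \<ge> 2"
  shows "{\<psi> \<in> chars_trivial_on I. socle_faithful \<psi>} = {}"
proof -
  have q: "2 \<le> card (UNIV :: 'a set)" by (rule two_le_card_field[OF finite_UNIV])
  then have "card (UNIV :: 'a set) * card I < card (UNIV :: 'a set) ^ 2 * card I"
    using card_I_pos by (simp add: power2_eq_square)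
  also have "\<dots> \<le> card S"
    using card_soc_pre power_increasing[OF assms, of "card (UNIV :: 'a set)"] q by simp
  finally show ?thesis using card_soc_pre_le_if_socle_faithful by fastforce
qed

end

theorem lemma6p3:
  fixes v n :: nat and I :: "((nat \<Rightarrow> nat) \<Rightarrow> 'a::{finite,field}) set"
  assumes "n \<ge> 1" and "v \<ge> 1"
    and "ideal I (Rring v n)"
  shows "real (card {\<psi>. add_char v n \<psi> \<and> I \<subseteq> char_ker v n \<psi> \<and>
              (\<forall>J. ideal J (Rring v n) \<and> J \<subseteq> char_ker v n \<psi> \<longrightarrow> J \<subseteq> I)})
         = real (card (Rcar v n :: ((nat \<Rightarrow> nat) \<Rightarrow> 'a) set)) / real (card I) *
           (if socle_dim v n I = 0 then 1
            else if socle_dim v n I = 1 then 1 - 1 / real (card (UNIV :: 'a set))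
            else 0)"
proof -
  interpret finite_Rring_ideal v n I
    using assms(1,3) by (simp add: finite_Rring_ideal_def Rring_ideal_def)
  consider "socle_dim v n I = 0" | "socle_dim v n I = 1" | "socle_dim v n I \<ge> 2" by linarith
  then show ?thesis
  proof cases
    case 1
    then show ?thesis
      using socle_faithful_socle_dim_0 card_chars_trivial_on[OF subspace_I I_subset]
      by (simp add: counted_characters_eq)
  next
    case 2
    then show ?thesis using card_socle_faithful_socle_dim_1 by (simp add: counted_characters_eq)
  next
    case 3
    then show ?thesis unfolding counted_characters_eq no_socle_faithful_socle_dim_ge_2[OF 3] by simp
  qed
qed

end
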